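(* Let $X$ be a connected $k$-regular graph and $U$ the transition matrix of the Grover walk on $X$. Let $\lambda$ be an eigenvalue of $A(X)$ with $\lambda\neq\pm k$, let $E_\lambda$ be the orthogonal projection onto the $\lambda$-eigenspace of $A(X)$, and write $\lambda=k\cos\theta$ with $\theta\in(0,\pi)$. Then $e^{i\theta}$ and $e^{-i\theta}$ are eigenvalues of $U$, and if $F_{\theta_+}$ and $F_{\theta_-}$ denote the orthogonal projections onto the $e^{i\theta}$- and $e^{-i\theta}$-eigenspaces of $U$ respectively, then $F_{\theta_+}-F_{\theta_-}$ is a purely imaginary scalar multiple of \[D_t^TE_\lambda D_h - D_h^TE_\lambda D_t.\]
   Context: Each edge $\{a,b\}$ of $X$ is replaced by arcs $(a,b)$ and $(b,a)$. The line digraph $\mathrm{LD}(X)$ has the arcs as vertices, with an arc from $(a,b)$ to $(c,d)$ iff $b=c$; $A(\mathrm{LD}(X))$ is its $01$-adjacency matrix. $R$ is the permutation matrix on arcs mapping $(a,b)$ to $(b,a)$. The transition matrix of the Grover walk is $U=\frac{2}{k}A(\mathrm{LD}(X))-R$ (a real orthogonal matrix). $D_t$ and $D_h$ have rows indexed by vertices and columns by arcs: $(D_t)_{u,(a,b)}=1$ iff $u=a$, $(D_h)_{u,(a,b)}=1$ iff $u=b$, and $0$ otherwise. *)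

theory Defs
  imports Complex_Main
begin

text \<open>Finite simple graphs: vertex set is a finite type, adjacency a symmetric irreflexive relation.
  Matrices are functions of two indices, considered only on explicit finite index sets.\<close>

definition simple_graph :: "('v \<Rightarrow> 'v \<Rightarrow> bool) \<Rightarrow> bool" where
  "simple_graph E \<longleftrightarrow> (\<forall>a b. E a b \<longrightarrow> E b a) \<and> (\<forall>a. \<not> E a a)"

definition regular_graph :: "('v \<Rightarrow> 'v \<Rightarrow> bool) \<Rightarrow> nat \<Rightarrow> bool" where
  "regular_graph E k \<longleftrightarrow> (\<forall>v. card {u. E v u} = k)"

definition connected_graph :: "('v \<Rightarrow> 'v \<Rightarrow> bool) \<Rightarrow> bool" where
  "connected_graph E \<longleftrightarrow> (\<forall>u v. E\<^sup>*\<^sup>* u v)"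

definition adj_matrix :: "('v \<Rightarrow> 'v \<Rightarrow> bool) \<Rightarrow> 'v \<Rightarrow> 'v \<Rightarrow> complex" where
  "adj_matrix E u v = (if E u v then 1 else 0)"

definition arcs :: "('v \<Rightarrow> 'v \<Rightarrow> bool) \<Rightarrow> ('v \<times> 'v) set" where
  "arcs E = {(a,b). E a b}"

definition line_digraph_adj :: "('v \<times> 'v) \<Rightarrow> ('v \<times> 'v) \<Rightarrow> complex" where
  "line_digraph_adj x y = (if snd x = fst y then 1 else 0)"

definition arc_reversal :: "('v \<times> 'v) \<Rightarrow> ('v \<times> 'v) \<Rightarrow> complex" where
  "arc_reversal x y = (if y = (snd x, fst x) then 1 else 0)"

definition grover_U :: "nat \<Rightarrow> ('v \<times> 'v) \<Rightarrow> ('v \<times> 'v) \<Rightarrow> complex" where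
  "grover_U k x y = (2 / of_nat k) * line_digraph_adj x y - arc_reversal x y"

definition tail_inc :: "'v \<Rightarrow> ('v \<times> 'v) \<Rightarrow> complex" where
  "tail_inc u x = (if u = fst x then 1 else 0)"

definition head_inc :: "'v \<Rightarrow> ('v \<times> 'v) \<Rightarrow> complex" where
  "head_inc u x = (if u = snd x then 1 else 0)"

definition mat_vec :: "'i set \<Rightarrow> ('i \<Rightarrow> 'i \<Rightarrow> complex) \<Rightarrow> ('i \<Rightarrow> complex) \<Rightarrow> 'i \<Rightarrow> complex" where
  "mat_vec I M x = (\<lambda>i. \<Sum>j\<in>I. M i j * x j)"

definition eigenspace_on :: "'i set \<Rightarrow> ('i \<Rightarrow> 'i \<Rightarrow> complex) \<Rightarrow> complex \<Rightarrow> ('i \<Rightarrow> complex) set" where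
  "eigenspace_on I M \<mu> = {x. \<forall>i\<in>I. mat_vec I M x i = \<mu> * x i}"

definition is_eigenvalue_on :: "'i set \<Rightarrow> ('i \<Rightarrow> 'i \<Rightarrow> complex) \<Rightarrow> complex \<Rightarrow> bool" where
  "is_eigenvalue_on I M \<mu> \<longleftrightarrow> (\<exists>x\<in>eigenspace_on I M \<mu>. \<exists>i\<in>I. x i \<noteq> 0)"

definition orth_proj_onto :: "'i set \<Rightarrow> ('i \<Rightarrow> complex) set \<Rightarrow> ('i \<Rightarrow> 'i \<Rightarrow> complex) \<Rightarrow> bool" where
  "orth_proj_onto I W P \<longleftrightarrow>
     (\<forall>x. mat_vec I P x \<in> W \<and>
          (\<forall>w\<in>W. (\<Sum>i\<in>I. (x i - mat_vec I P x i) * cnj (w i)) = 0))"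

end

theory Submission
  imports Defs
begin

text \<open>Let \<open>\<mu>\<close> be a unit complex number with \<open>\<mu> \<noteq> \<plusminus>1\<close> and \<open>2L = k(\<mu> + cnj \<mu>)\<close>. The map
  \<open>z \<mapsto> (D\<^sub>h\<^sup>T - cnj \<mu> D\<^sub>t\<^sup>T) z\<close> sends the \<open>L\<close>-eigenspace of \<open>A(X)\<close> onto the \<open>\<mu>\<close>-eigenspace of \<open>U\<close>
  (an eigenvector of \<open>U\<close> is recovered from its sums over outgoing arcs) and multiplies inner
  products by the nonzero real number \<open>s = 2k - L(\<mu> + cnj \<mu>)\<close>. Hence the projection onto the
  \<open>\<mu>\<close>-eigenspace of \<open>U\<close> is \<open>(D\<^sub>h\<^sup>T - cnj \<mu> D\<^sub>t\<^sup>T) E\<^sub>L (D\<^sub>h - \<mu> D\<^sub>t) / s\<close>. For \<open>\<mu> = e\<^sup>i\<^sup>\<theta>\<close> and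
  \<open>cnj \<mu> = e\<^sup>-\<^sup>i\<^sup>\<theta>\<close> the numbers \<open>L = \<lambda>\<close> and \<open>s\<close> coincide, so the difference of the two projections
  is \<open>(\<mu> - cnj \<mu>) / s\<close> times \<open>D\<^sub>t\<^sup>T E\<^sub>\<lambda> D\<^sub>h - D\<^sub>h\<^sup>T E\<^sub>\<lambda> D\<^sub>t\<close>, and \<open>\<mu> - cnj \<mu> = 2i sin \<theta>\<close>.\<close>

lemma sum_arcs:
  fixes E :: "'v::finite \<Rightarrow> 'v \<Rightarrow> bool"
  shows "(\<Sum>p\<in>arcs E. f p) = (\<Sum>a\<in>UNIV. \<Sum>b\<in>UNIV. if E a b then f (a, b) else 0)"
proof -
  have "(\<Sum>p\<in>arcs E. f p) = (\<Sum>p\<in>UNIV. if p \<in> arcs E then f p else 0)"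
    by (simp add: sum.If_cases Int_absorb1)
  also have "\<dots> = (\<Sum>p\<in>UNIV \<times> UNIV. if E (fst p) (snd p) then f p else 0)"
    by (simp add: arcs_def case_prod_beta)
  also have "\<dots> = (\<Sum>a\<in>UNIV. \<Sum>b\<in>UNIV. if E a b then f (a, b) else 0)"
    by (simp only: sum.cartesian_product UNIV_Times_UNIV) (rule sum.cong; auto)
  finally show ?thesis .
qed

lemma arcs_swap:
  assumes "simple_graph E" "(a, b) \<in> arcs E"
  shows "(b, a) \<in> arcs E"
  using assms by (auto simp: arcs_def simple_graph_def)

lemma regular_graph_sum_neighbours_const:
  fixes E :: "'v::finite \<Rightarrow> 'v \<Rightarrow> bool"
  assumes "regular_graph E k"
  shows "(\<Sum>w\<in>UNIV. if E v w then (c::complex) else 0) = of_nat k * c"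
proof -
  have "(\<Sum>w\<in>UNIV. if E v w then c else 0) = (\<Sum>w\<in>{w. E v w}. c)"
    by (simp add: sum.If_cases Int_def)
  also have "\<dots> = of_nat k * c"
    using assms by (simp add: regular_graph_def)
  finally show ?thesis .
qed

lemma mat_vec_adj_matrix:
  "mat_vec UNIV (adj_matrix E) z v = (\<Sum>w\<in>UNIV. if E v w then z w else 0)"
  unfolding mat_vec_def adj_matrix_def by (rule sum.cong) auto

lemma eigenspace_on_adj_matrix_iff:
  "z \<in> eigenspace_on UNIV (adj_matrix E) L \<longleftrightarrow>
     (\<forall>v. (\<Sum>w\<in>UNIV. if E v w then z w else 0) = L * z v)"
  by (simp add: eigenspace_on_def mat_vec_adj_matrix)

lemma eigenspace_on_diff:
  assumes "x \<in> eigenspace_on I M \<mu>" "y \<in> eigenspace_on I M \<mu>"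
  shows "(\<lambda>i. x i - y i) \<in> eigenspace_on I M \<mu>"
  using assms unfolding eigenspace_on_def mat_vec_def
  by (simp add: right_diff_distrib sum_subtractf)

lemma eigenspace_on_scale:
  assumes "x \<in> eigenspace_on I M \<mu>"
  shows "(\<lambda>i. c * x i) \<in> eigenspace_on I M \<mu>"
proof -
  have "(\<Sum>j\<in>I. M i j * (c * x j)) = c * (\<Sum>j\<in>I. M i j * x j)" for i
    by (simp add: sum_distrib_left algebra_simps)
  then show ?thesis
    using assms unfolding eigenspace_on_def mat_vec_def by (simp add: algebra_simps)
qed

text \<open>The vector \<open>out_sum E x\<close> is \<open>D\<^sub>t x\<close>.\<close>

definition out_sum :: "('v \<Rightarrow> 'v \<Rightarrow> bool) \<Rightarrow> ('v \<times> 'v \<Rightarrow> complex) \<Rightarrow> 'v \<Rightarrow> complex" where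
  "out_sum E x v = (\<Sum>w\<in>UNIV. if E v w then x (v, w) else 0)"

lemma mat_vec_grover_U:
  fixes E :: "'v::finite \<Rightarrow> 'v \<Rightarrow> bool"
  assumes "simple_graph E" "(a, b) \<in> arcs E"
  shows "mat_vec (arcs E) (grover_U k) x (a, b) = 2 / of_nat k * out_sum E x b - x (b, a)"
proof -
  have "mat_vec (arcs E) (grover_U k) x (a, b)
      = 2 / of_nat k * (\<Sum>q\<in>arcs E. (if b = fst q then 1 else 0) * x q)
        - (\<Sum>q\<in>arcs E. if q = (b, a) then x q else 0)"
    unfolding mat_vec_def sum_distrib_left sum_subtractf[symmetric]
    by (rule sum.cong) (auto simp: grover_U_def line_digraph_adj_def arc_reversal_def algebra_simps)
  also have "(\<Sum>q\<in>arcs E. if q = (b, a) then x q else 0) = x (b, a)"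
    using arcs_swap[OF assms] by simp
  also have "(\<Sum>q\<in>arcs E. (if b = fst q then 1 else 0) * x q)
      = (\<Sum>c\<in>UNIV. if c = b then out_sum E x c else 0)"
    unfolding sum_arcs out_sum_def by (rule sum.cong) (simp_all cong: if_cong)
  finally show ?thesis by simp
qed

text \<open>In the paper's notation \<open>arc_lift \<mu> z = (D\<^sub>h\<^sup>T - cnj \<mu> D\<^sub>t\<^sup>T) z\<close>.\<close>

definition arc_lift :: "complex \<Rightarrow> ('v \<Rightarrow> complex) \<Rightarrow> 'v \<times> 'v \<Rightarrow> complex" where
  "arc_lift \<mu> z p = z (snd p) - cnj \<mu> * z (fst p)"

lemma arc_lift_in_eigenspace:
  fixes E :: "'v::finite \<Rightarrow> 'v \<Rightarrow> bool"
  assumes "simple_graph E" "regular_graph E k" "k > 0"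
    and "cnj \<mu> * \<mu> = 1" "2 * L = of_nat k * (\<mu> + cnj \<mu>)"
    and "z \<in> eigenspace_on UNIV (adj_matrix E) L"
  shows "arc_lift \<mu> z \<in> eigenspace_on (arcs E) (grover_U k) \<mu>"
  unfolding eigenspace_on_def
proof clarify
  fix a b assume ab: "(a, b) \<in> arcs E"
  have "out_sum E (arc_lift \<mu> z) b
      = (\<Sum>w\<in>UNIV. (if E b w then z w else 0) - (if E b w then cnj \<mu> * z b else 0))"
    unfolding out_sum_def by (rule sum.cong) (auto simp: arc_lift_def)
  also have "\<dots> = L * z b - of_nat k * (cnj \<mu> * z b)"
    using assms(2,6)
    by (simp add: sum_subtractf regular_graph_sum_neighbours_const eigenspace_on_adj_matrix_iff)
  finally have out: "out_sum E (arc_lift \<mu> z) b = L * z b - of_nat k * (cnj \<mu> * z b)" .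
  have L: "L = of_nat k * (\<mu> + cnj \<mu>) / 2"
    using assms(5) by (simp add: eq_divide_eq mult.commute)
  show "mat_vec (arcs E) (grover_U k) (arc_lift \<mu> z) (a, b) = \<mu> * arc_lift \<mu> z (a, b)"
    unfolding mat_vec_grover_U[OF assms(1) ab] out L using assms(3,4)
    by (simp add: arc_lift_def field_simps)
qed

text \<open>Combining the eigen-equations at the two arcs \<open>(a, b)\<close> and \<open>(b, a)\<close> of one edge.\<close>

lemma grover_U_eigenvector_entry:
  fixes E :: "'v::finite \<Rightarrow> 'v \<Rightarrow> bool"
  assumes "simple_graph E" "x \<in> eigenspace_on (arcs E) (grover_U k) \<mu>" "E a b"
  shows "(1 - \<mu>\<^sup>2) * x (a, b) = 2 / of_nat k * (out_sum E x a - \<mu> * out_sum E x b)"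
proof -
  have ab: "(a, b) \<in> arcs E" using assms(3) by (simp add: arcs_def)
  have ba: "(b, a) \<in> arcs E" using arcs_swap[OF assms(1) ab] .
  have "2 / of_nat k * out_sum E x b - x (b, a) = \<mu> * x (a, b)"
    using assms(2) ab unfolding eigenspace_on_def mat_vec_grover_U[OF assms(1) ab, symmetric] by blast
  then have ba_val: "x (b, a) = 2 / of_nat k * out_sum E x b - \<mu> * x (a, b)"
    by (simp add: algebra_simps)
  have "2 / of_nat k * out_sum E x a - x (a, b) = \<mu> * x (b, a)"
    using assms(2) ba unfolding eigenspace_on_def mat_vec_grover_U[OF assms(1) ba, symmetric] by blast
  then show ?thesis
    unfolding ba_val by (simp add: algebra_simps power2_eq_square)
qed

lemma eigenspace_grover_U_arc_lift:
  fixes E :: "'v::finite \<Rightarrow> 'v \<Rightarrow> bool"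
  assumes "simple_graph E" "regular_graph E k" "k > 0"
    and "cnj \<mu> * \<mu> = 1" "\<mu>\<^sup>2 \<noteq> 1" "2 * L = of_nat k * (\<mu> + cnj \<mu>)"
    and "x \<in> eigenspace_on (arcs E) (grover_U k) \<mu>"
  shows "\<exists>z\<in>eigenspace_on UNIV (adj_matrix E) L. \<forall>p\<in>arcs E. x p = arc_lift \<mu> z p"
proof -
  define K :: complex where "K = of_nat k"
  define T where "T = out_sum E x"
  define c where "c = 2 / (K * (1 - \<mu>\<^sup>2))"
  have K: "K \<noteq> 0" using assms(3) by (simp add: K_def)
  have m0: "\<mu> \<noteq> 0" and m1: "1 - \<mu>\<^sup>2 \<noteq> 0" using assms(4,5) by auto
  have "cnj \<mu> = 1 / \<mu>" using assms(4) m0 by (simp add: eq_divide_eq)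
  then have L: "L = K * (\<mu> + 1 / \<mu>) / 2"
    using assms(6) by (metis K_def mult.commute nonzero_mult_div_cancel_left zero_neq_numeral)
  have x: "x (a, b) = c * (T a - \<mu> * T b)" if "E a b" for a b
    using grover_U_eigenvector_entry[OF assms(1,7) that] m1 K
    by (simp add: c_def T_def K_def field_simps)
  have AT: "(\<Sum>b\<in>UNIV. if E a b then T b else 0) = L * T a" for a
  proof -
    have "T a = (\<Sum>b\<in>UNIV. (if E a b then c * T a else 0) - c * \<mu> * (if E a b then T b else 0))"
      by (subst (1) T_def, unfold out_sum_def) (rule sum.cong, auto simp: x algebra_simps)
    also have "\<dots> = K * (c * T a) - c * \<mu> * (\<Sum>b\<in>UNIV. if E a b then T b else 0)"
      using assms(2)
      by (simp add: sum_subtractf regular_graph_sum_neighbours_const sum_distrib_left K_def)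
    finally show ?thesis
      using m0 m1 K unfolding L c_def by (simp add: field_simps power2_eq_square)
  qed
  define z where "z v = - \<mu> * c * T v" for v
  have "z \<in> eigenspace_on UNIV (adj_matrix E) L"
    unfolding z_def using eigenspace_on_scale AT eigenspace_on_adj_matrix_iff by blast
  moreover have "x p = arc_lift \<mu> z p" if "p \<in> arcs E" for p
    using that assms(4) by (auto simp: arcs_def x arc_lift_def z_def algebra_simps)
  ultimately show ?thesis by blast
qed

lemma inner_arc_lift:
  fixes E :: "'v::finite \<Rightarrow> 'v \<Rightarrow> bool"
  assumes "simple_graph E" "regular_graph E k" "cnj \<mu> * \<mu> = 1" "cnj L = L"
    and "z' \<in> eigenspace_on UNIV (adj_matrix E) L"
  shows "(\<Sum>p\<in>arcs E. arc_lift \<mu> z p * cnj (arc_lift \<mu> z' p))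
       = (2 * of_nat k - L * (\<mu> + cnj \<mu>)) * (\<Sum>v\<in>UNIV. z v * cnj (z' v))"
proof -
  define S where "S = (\<Sum>v\<in>UNIV. z v * cnj (z' v))"
  have sym: "E a b = E b a" for a b using assms(1) by (auto simp: simple_graph_def)
  have swap: "(\<Sum>a\<in>UNIV. \<Sum>b\<in>UNIV. if E a b then g a b else 0)
            = (\<Sum>b\<in>UNIV. \<Sum>a\<in>UNIV. if E b a then g a b else 0)" for g :: "'v \<Rightarrow> 'v \<Rightarrow> complex"
    by (subst sum.swap) (simp add: sym)
  have A_cnj: "(\<Sum>b\<in>UNIV. if E a b then (c::complex) * cnj (z' b) else 0) = c * cnj (L * z' a)" for a c
  proof -
    have "(\<Sum>b\<in>UNIV. if E a b then c * cnj (z' b) else 0)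
        = c * cnj (\<Sum>b\<in>UNIV. if E a b then z' b else 0)"
      by (simp add: sum_distrib_left cnj_sum if_distrib) (rule sum.cong, auto)
    moreover have "(\<Sum>b\<in>UNIV. if E a b then z' b else 0) = L * z' a"
      using assms(5) by (simp add: eigenspace_on_adj_matrix_iff)
    ultimately show ?thesis by metis
  qed
  have S1: "(\<Sum>a\<in>UNIV. \<Sum>b\<in>UNIV. if E a b then z b * cnj (z' b) else 0) = of_nat k * S"
    by (subst swap) (use assms(2) in \<open>simp add: regular_graph_sum_neighbours_const S_def sum_distrib_left\<close>)
  have S2: "(\<Sum>a\<in>UNIV. \<Sum>b\<in>UNIV. if E a b then z b * cnj (z' a) else 0) = L * S"
    by (subst swap) (use assms(4) in \<open>simp add: A_cnj S_def sum_distrib_left algebra_simps\<close>)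
  have S3: "(\<Sum>a\<in>UNIV. \<Sum>b\<in>UNIV. if E a b then z a * cnj (z' b) else 0) = L * S"
    unfolding A_cnj using assms(4) by (simp add: S_def sum_distrib_left algebra_simps)
  have S4: "(\<Sum>a\<in>UNIV. \<Sum>b\<in>UNIV. if E a b then z a * cnj (z' a) else 0) = of_nat k * S"
    using assms(2) by (simp add: regular_graph_sum_neighbours_const S_def sum_distrib_left)
  have "(\<Sum>p\<in>arcs E. arc_lift \<mu> z p * cnj (arc_lift \<mu> z' p))
     = (\<Sum>a\<in>UNIV. \<Sum>b\<in>UNIV. (if E a b then z b * cnj (z' b) else 0)
         - \<mu> * (if E a b then z b * cnj (z' a) else 0)
         - cnj \<mu> * (if E a b then z a * cnj (z' b) else 0)
         + (if E a b then z a * cnj (z' a) else 0))"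
    unfolding sum_arcs arc_lift_def using assms(3)
    by (intro sum.cong refl) (simp add: algebra_simps)
  also have "\<dots> = of_nat k * S - \<mu> * (L * S) - cnj \<mu> * (L * S) + of_nat k * S"
    by (simp only: sum.distrib sum_subtractf sum_distrib_left[symmetric] S1 S2 S3 S4)
  finally show ?thesis by (simp add: S_def algebra_simps)
qed

lemma sum_mult_cnj_self_eq_0D:
  assumes "finite A" "(\<Sum>p\<in>A. x p * cnj (x p)) = 0" "p \<in> A"
  shows "x p = 0"
proof -
  have "(\<Sum>p\<in>A. x p * cnj (x p)) = of_real (\<Sum>p\<in>A. (cmod (x p))\<^sup>2)"
    unfolding of_real_sum by (rule sum.cong) (simp_all only: complex_norm_square refl)
  then have "(\<Sum>p\<in>A. (cmod (x p))\<^sup>2) = 0" using assms(2) by (metis of_real_eq_0_iff)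
  then have "(cmod (x p))\<^sup>2 = 0" using assms(1,3) by (subst (asm) sum_nonneg_eq_0_iff) auto
  then show ?thesis by simp
qed

lemma orth_proj_onto_apply_eq:
  assumes "finite I" "orth_proj_onto I W P"
    and W_diff: "\<And>x y. x \<in> W \<Longrightarrow> y \<in> W \<Longrightarrow> (\<lambda>i. x i - y i) \<in> W"
    and "g \<in> W" "\<And>w. w \<in> W \<Longrightarrow> (\<Sum>i\<in>I. (x i - g i) * cnj (w i)) = 0"
    and "i \<in> I"
  shows "mat_vec I P x i = g i"
proof -
  define f where "f = mat_vec I P x"
  define d where "d i = f i - g i" for i
  have "f \<in> W" and f_orth: "\<And>w. w \<in> W \<Longrightarrow> (\<Sum>i\<in>I. (x i - f i) * cnj (w i)) = 0"
    using assms(2) unfolding orth_proj_onto_def f_def by auto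
  then have "d \<in> W" unfolding d_def using W_diff assms(4) by simp
  have "(\<Sum>i\<in>I. d i * cnj (d i))
      = (\<Sum>i\<in>I. (x i - g i) * cnj (d i)) - (\<Sum>i\<in>I. (x i - f i) * cnj (d i))"
    by (simp add: sum_subtractf[symmetric] d_def algebra_simps)
  also have "\<dots> = 0" using assms(5)[OF \<open>d \<in> W\<close>] f_orth[OF \<open>d \<in> W\<close>] by simp
  finally have "d i = 0" by (rule sum_mult_cnj_self_eq_0D[OF assms(1) _ assms(6)])
  then show ?thesis by (simp add: d_def f_def)
qed

lemma grover_scale_nonzero:
  assumes "k > 0" "cnj \<mu> * \<mu> = 1" "\<mu>\<^sup>2 \<noteq> 1" "2 * L = of_nat k * (\<mu> + cnj \<mu>)"
  shows "2 * of_nat k - L * (\<mu> + cnj \<mu>) \<noteq> 0"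
proof -
  have L: "L = of_nat k * (\<mu> + cnj \<mu>) / 2" using assms(4) by (simp add: eq_divide_eq mult.commute)
  have "(\<mu> + cnj \<mu>)\<^sup>2 = (\<mu> - cnj \<mu>)\<^sup>2 + 4 * (cnj \<mu> * \<mu>)"
    by (simp add: power2_eq_square algebra_simps)
  then have "(\<mu> + cnj \<mu>)\<^sup>2 = (\<mu> - cnj \<mu>)\<^sup>2 + 4"
    by (simp only: assms(2) mult_1_right)
  have "2 * of_nat k - L * (\<mu> + cnj \<mu>) = of_nat k / 2 * (4 - (\<mu> + cnj \<mu>)\<^sup>2)"
    unfolding L by (simp add: field_simps power2_eq_square)
  also have "\<dots> = - of_nat k / 2 * (\<mu> - cnj \<mu>)\<^sup>2"
    using \<open>(\<mu> + cnj \<mu>)\<^sup>2 = (\<mu> - cnj \<mu>)\<^sup>2 + 4\<close> by simp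
  finally have "2 * of_nat k - L * (\<mu> + cnj \<mu>) = - of_nat k / 2 * (\<mu> - cnj \<mu>)\<^sup>2" .
  moreover have "\<mu> - cnj \<mu> \<noteq> 0"
  proof
    assume "\<mu> - cnj \<mu> = 0"
    then have "\<mu>\<^sup>2 = cnj \<mu> * \<mu>" by (simp add: power2_eq_square)
    with assms(2,3) show False by simp
  qed
  ultimately show ?thesis using assms(1) by simp
qed

text \<open>The column of \<open>F\<close> at the arc \<open>(c, d)\<close> is the lift of \<open>E\<^sub>L y / s\<close>, where \<open>y = e\<^sub>d - \<mu> e\<^sub>c\<close>
  is the image of the basis vector at \<open>(c, d)\<close> under the adjoint of \<open>arc_lift \<mu>\<close>.\<close>

lemma grover_projection_entry:
  fixes E :: "'v::finite \<Rightarrow> 'v \<Rightarrow> bool"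
  assumes G: "simple_graph E" "regular_graph E k" "k > 0"
    and \<mu>: "cnj \<mu> * \<mu> = 1" "\<mu>\<^sup>2 \<noteq> 1"
    and L: "2 * L = of_nat k * (\<mu> + cnj \<mu>)" "cnj L = L"
    and El: "orth_proj_onto UNIV (eigenspace_on UNIV (adj_matrix E) L) El"
    and F: "orth_proj_onto (arcs E) (eigenspace_on (arcs E) (grover_U k) \<mu>) F"
    and ab: "(a, b) \<in> arcs E" and cd: "(c, d) \<in> arcs E"
  shows "F (a, b) (c, d) = (El b d - \<mu> * El b c - cnj \<mu> * El a d + El a c)
                          / (2 * of_nat k - L * (\<mu> + cnj \<mu>))"
proof -
  define s where "s = 2 * of_nat k - L * (\<mu> + cnj \<mu>)"
  have s: "s \<noteq> 0" unfolding s_def using grover_scale_nonzero[OF G(3) \<mu> L(1)] .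
  define y where "y v = (if v = d then 1 else 0) - \<mu> * (if v = c then 1 else (0::complex))" for v
  define z where "z = mat_vec UNIV El y"
  have z_apply: "z u = El u d - \<mu> * El u c" for u
    unfolding z_def mat_vec_def y_def
    by (simp add: right_diff_distrib sum_subtractf if_distrib[where f = "times x" for x] cong: if_cong)
  have z: "z \<in> eigenspace_on UNIV (adj_matrix E) L"
    and y_orth: "\<And>w. w \<in> eigenspace_on UNIV (adj_matrix E) L \<Longrightarrow> (\<Sum>v\<in>UNIV. (y v - z v) * cnj (w v)) = 0"
    using El unfolding orth_proj_onto_def z_def by auto
  define g where "g = arc_lift \<mu> (\<lambda>v. 1 / s * z v)"
  define e where "e p = (if p = (c, d) then 1 else (0::complex))" for p
  have "g \<in> eigenspace_on (arcs E) (grover_U k) \<mu>"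
    unfolding g_def by (intro arc_lift_in_eigenspace[OF G \<mu>(1) L(1)] eigenspace_on_scale z)
  moreover have "(\<Sum>p\<in>arcs E. (e p - g p) * cnj (w p)) = 0"
    if w_eig: "w \<in> eigenspace_on (arcs E) (grover_U k) \<mu>" for w
  proof -
    obtain z' where z': "z' \<in> eigenspace_on UNIV (adj_matrix E) L"
      and w: "\<And>p. p \<in> arcs E \<Longrightarrow> w p = arc_lift \<mu> z' p"
      using eigenspace_grover_U_arc_lift[OF G \<mu> L(1) w_eig] by blast
    have "(\<Sum>p\<in>arcs E. (e p - g p) * cnj (w p))
        = (\<Sum>p\<in>arcs E. e p * cnj (arc_lift \<mu> z' p)) - (\<Sum>p\<in>arcs E. g p * cnj (arc_lift \<mu> z' p))"
      by (simp add: sum_subtractf[symmetric] left_diff_distrib w)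
    also have "(\<Sum>p\<in>arcs E. e p * cnj (arc_lift \<mu> z' p)) = (\<Sum>v\<in>UNIV. y v * cnj (z' v))"
      using cd
      by (simp add: e_def y_def arc_lift_def left_diff_distrib sum_subtractf mult.assoc
          sum_distrib_left[symmetric] if_distrib[of "\<lambda>t. t * _"] cong: if_cong)
    also have "(\<Sum>p\<in>arcs E. g p * cnj (arc_lift \<mu> z' p)) = (\<Sum>v\<in>UNIV. z v * cnj (z' v))"
      unfolding g_def inner_arc_lift[OF G(1,2) \<mu>(1) L(2) z'] s_def[symmetric]
      using s by (simp add: sum_distrib_left)
    finally show ?thesis
      using y_orth[OF z'] by (simp add: sum_subtractf[symmetric] left_diff_distrib)
  qed
  ultimately have "mat_vec (arcs E) F e (a, b) = g (a, b)"
    by (intro orth_proj_onto_apply_eq[OF _ F eigenspace_on_diff _ _ ab]) simp_all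
  moreover have "mat_vec (arcs E) F e (a, b) = F (a, b) (c, d)"
    using cd by (simp add: mat_vec_def e_def if_distrib[where f = "times x" for x] cong: if_cong)
  moreover have "g (a, b) = (El b d - \<mu> * El b c - cnj \<mu> * El a d + El a c) / s"
    unfolding g_def arc_lift_def z_apply using s \<mu>(1) mult.commute[of "cnj \<mu>" \<mu>]
    by (simp add: field_simps)
  ultimately show ?thesis by (simp add: s_def)
qed

lemma is_eigenvalue_on_grover_U:
  fixes E :: "'v::finite \<Rightarrow> 'v \<Rightarrow> bool"
  assumes G: "simple_graph E" "regular_graph E k" "k > 0"
    and \<mu>: "cnj \<mu> * \<mu> = 1" "\<mu>\<^sup>2 \<noteq> 1"
    and L: "2 * L = of_nat k * (\<mu> + cnj \<mu>)"
    and "is_eigenvalue_on UNIV (adj_matrix E) L"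
  shows "is_eigenvalue_on (arcs E) (grover_U k) \<mu>"
proof -
  obtain z i where z: "z \<in> eigenspace_on UNIV (adj_matrix E) L" and "z i \<noteq> 0"
    using assms(7) unfolding is_eigenvalue_on_def by blast
  have "{j. E i j} \<noteq> {}" using G(2,3) unfolding regular_graph_def by (metis card.empty less_irrefl)
  then obtain j where ij: "(i, j) \<in> arcs E" by (auto simp: arcs_def)
  have ji: "(j, i) \<in> arcs E" using arcs_swap[OF G(1) ij] .
  have "arc_lift \<mu> z (i, j) \<noteq> 0 \<or> arc_lift \<mu> z (j, i) \<noteq> 0"
  proof (rule ccontr)
    assume "\<not> ?thesis"
    then have "z i = (cnj \<mu>)\<^sup>2 * z i" by (simp add: arc_lift_def power2_eq_square)
    then have "cnj (\<mu>\<^sup>2) = cnj 1" using \<open>z i \<noteq> 0\<close> by simp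
    with \<mu>(2) show False by (simp only: complex_cnj_cancel_iff)
  qed
  then show ?thesis
    unfolding is_eigenvalue_on_def using arc_lift_in_eigenspace[OF G \<mu>(1) L z] ij ji by blast
qed

lemma grover_parameters_cnj:
  assumes "cnj \<mu> * \<mu> = 1" "\<mu>\<^sup>2 \<noteq> 1" "2 * L = of_nat k * (\<mu> + cnj \<mu>)"
  shows "cnj (cnj \<mu>) * cnj \<mu> = 1" "(cnj \<mu>)\<^sup>2 \<noteq> 1" "2 * L = of_nat k * (cnj \<mu> + cnj (cnj \<mu>))"
  using assms by (simp_all add: mult.commute add.commute flip: complex_cnj_power)

lemma grover_projection_conj_diff:
  fixes E :: "'v::finite \<Rightarrow> 'v \<Rightarrow> bool"
  assumes G: "simple_graph E" "regular_graph E k" "k > 0"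
    and \<mu>: "cnj \<mu> * \<mu> = 1" "\<mu>\<^sup>2 \<noteq> 1"
    and L: "2 * L = of_nat k * (\<mu> + cnj \<mu>)" "cnj L = L"
    and El: "orth_proj_onto UNIV (eigenspace_on UNIV (adj_matrix E) L) El"
    and Fp: "orth_proj_onto (arcs E) (eigenspace_on (arcs E) (grover_U k) \<mu>) Fp"
    and Fm: "orth_proj_onto (arcs E) (eigenspace_on (arcs E) (grover_U k) (cnj \<mu>)) Fm"
    and ab: "(a, b) \<in> arcs E" and cd: "(c, d) \<in> arcs E"
  shows "Fp (a, b) (c, d) - Fm (a, b) (c, d)
       = (\<mu> - cnj \<mu>) / (2 * of_nat k - L * (\<mu> + cnj \<mu>)) * (El a d - El b c)"
proof -
  define s where "s = 2 * of_nat k - L * (\<mu> + cnj \<mu>)"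
  have "Fp (a, b) (c, d) - Fm (a, b) (c, d)
      = ((El b d - \<mu> * El b c - cnj \<mu> * El a d + El a c)
         - (El b d - cnj \<mu> * El b c - \<mu> * El a d + El a c)) / s"
    unfolding grover_projection_entry[OF G \<mu> L El Fp ab cd]
      grover_projection_entry[OF G grover_parameters_cnj[OF \<mu> L(1)] L(2) El Fm ab cd] s_def
    by (simp add: add.commute flip: diff_divide_distrib)
  also have "\<dots> = (\<mu> - cnj \<mu>) * (El a d - El b c) / s"
    by (simp add: algebra_simps)
  finally show ?thesis by (simp add: s_def)
qed

lemma Re_diff_cnj_divide_real:
  assumes "cnj s = s"
  shows "Re ((\<mu> - cnj \<mu>) / s) = 0"
  using assms by (simp add: Re_divide complex_eq_iff)

lemma sum_incidence:
  fixes El :: "'v::finite \<Rightarrow> 'v \<Rightarrow> complex"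
  shows "(\<Sum>u\<in>UNIV. \<Sum>v\<in>UNIV. tail_inc u x * El u v * head_inc v y
                        - head_inc u x * El u v * tail_inc v y) = El (fst x) (snd y) - El (snd x) (fst y)"
  by (simp add: tail_inc_def head_inc_def sum_subtractf if_distrib[where f = "times x" for x]
      if_distrib[of "\<lambda>t. t * _"] cong: if_cong)

theorem corollary5p2:
  fixes E :: "'v::finite \<Rightarrow> 'v \<Rightarrow> bool" and k :: nat and lam \<theta> :: real
  assumes "simple_graph E" and "connected_graph E" and "regular_graph E k"
    and "is_eigenvalue_on UNIV (adj_matrix E) (complex_of_real lam)"
    and "lam \<noteq> real k" and "lam \<noteq> - real k"
    and "lam = real k * cos \<theta>" and "0 < \<theta>" and "\<theta> < pi"
  shows "is_eigenvalue_on (arcs E) (grover_U k) (exp (\<i> * complex_of_real \<theta>))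
       \<and> is_eigenvalue_on (arcs E) (grover_U k) (exp (- \<i> * complex_of_real \<theta>))
       \<and> (\<forall>El Fp Fm.
            orth_proj_onto UNIV (eigenspace_on UNIV (adj_matrix E) (complex_of_real lam)) El
          \<and> orth_proj_onto (arcs E) (eigenspace_on (arcs E) (grover_U k) (exp (\<i> * complex_of_real \<theta>))) Fp
          \<and> orth_proj_onto (arcs E) (eigenspace_on (arcs E) (grover_U k) (exp (- \<i> * complex_of_real \<theta>))) Fm
          \<longrightarrow> (\<exists>c. Re c = 0 \<and>
                (\<forall>x\<in>arcs E. \<forall>y\<in>arcs E.
                   Fp x y - Fm x y =
                   c * (\<Sum>u\<in>UNIV. \<Sum>v\<in>UNIV.
                          tail_inc u x * El u v * head_inc v y
                        - head_inc u x * El u v * tail_inc v y))))"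
proof -
  define \<mu> where "\<mu> = cis \<theta>"
  define L where "L = complex_of_real lam"
  define s where "s = 2 * of_nat k - L * (\<mu> + cnj \<mu>)"
  have exp_\<theta>: "exp (\<i> * complex_of_real \<theta>) = \<mu>" "exp (- \<i> * complex_of_real \<theta>) = cnj \<mu>"
    unfolding \<mu>_def cis_cnj by (simp_all add: cis_conv_exp)
  have G: "simple_graph E" "regular_graph E k" "k > 0"
    using assms(1,3,5,7) by (auto intro: gr0I)
  have "Im \<mu> \<noteq> 0" using sin_gt_zero[OF assms(8,9)] by (simp add: \<mu>_def)
  then have \<mu>: "cnj \<mu> * \<mu> = 1" "\<mu>\<^sup>2 \<noteq> 1"
    by (auto simp: power2_eq_1_iff, simp add: \<mu>_def cis_cnj cis_mult)
  have L: "2 * L = of_nat k * (\<mu> + cnj \<mu>)" "cnj L = L"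
    by (simp_all add: L_def assms(7) \<mu>_def complex_eq_iff)
  have A_eig: "is_eigenvalue_on UNIV (adj_matrix E) L" using assms(4) by (simp add: L_def)
  show ?thesis
    unfolding exp_\<theta> L_def[symmetric]
  proof (intro conjI allI impI ballI exI[of _ "(\<mu> - cnj \<mu>) / s"], goal_cases)
    case 1
    show ?case by (rule is_eigenvalue_on_grover_U[OF G \<mu> L(1) A_eig])
  next
    case 2
    show ?case by (rule is_eigenvalue_on_grover_U[OF G grover_parameters_cnj[OF \<mu> L(1)] A_eig])
  next
    case 3
    show ?case using L(2) by (simp add: s_def Re_diff_cnj_divide_real)
  next
    case (4 El Fp Fm x y)
    then show ?case
      using grover_projection_conj_diff[OF G \<mu> L, of El Fp Fm "fst x" "snd x" "fst y" "snd y"]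
      by (simp add: s_def sum_incidence)
  qed
qed

end
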